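(* Let $n\le -1$ be an odd integer. Then $q_n$ has no monic quadratic factor $f\in\mathbb{Z}[w]$ with $f\equiv (w+1)^2\pmod 2$.
   Context: Define $q_n\in\mathbb{Z}[w]$ for odd $n\le -1$ by $q_{-1}=w^3-w^2+2w-7$, $q_{-3}=w^5-2w^4-2w^3+5w^2+3w-9$, $q_{-5}=w^7-2w^6-4w^5+8w^4+4w^3-7w^2+2w-7$, and $q_n=(w^2-1)(q_{n+2}-q_{n+4})+q_{n+6}$ for odd $n<-5$. *)

theory Defs
  imports "HOL-Computational_Algebra.Polynomial"
begin

(* qseq k = q_{-(2k+1)} *)
fun qseq :: "nat \<Rightarrow> int poly" where
  "qseq 0 = [:-7, 2, -1, 1:]"
| "qseq (Suc 0) = [:-9, 3, 5, -2, -2, 1:]"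
| "qseq (Suc (Suc 0)) = [:-7, 2, -7, 4, 8, -4, -2, 1:]"
| "qseq (Suc (Suc (Suc k))) =
     [:-1, 0, 1:] * (qseq (Suc (Suc k)) - qseq (Suc k)) + qseq k"

definition q :: "int \<Rightarrow> int poly" where
  "q n = qseq (nat ((- n - 1) div 2))"

end

theory Submission
  imports Defs
begin

(* The polynomials q_n (odd n <= -1) are Defs.qseq k with n = -2k-1.  A monic quadratic
   f = w^2 + a w + b congruent to (w+1)^2 mod 2 has a even and b odd.  If f divides
   q_n then f(x) divides q_n(x) for every integer x, and f(x) = 0 mod m implies
   q_n(x) = 0 mod m.  The values q_n(x) mod m satisfy the recurrence of the q_n, so a
   repetition of the initial triple of residues (checked by evaluation) makes them
   periodic in k.  The argument splits by k mod 6: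
   - for k mod 6 in {0,2,3,5}, q_n(1) is odd while f(1) is even;
   - for k mod 6 in {1,4}, the exactly periodic values at x = 1, -1, 0 leave finitely
     many candidates (a, b), each excluded by a certificate (x, m): f(x) = 0 mod m but
     q_n(x) is nonzero mod m for all k in the residue class;
   - the single remaining candidate w^2 + 2w - 7 is excluded by showing that the value
     of q_n at its real root -1 - 2 sqrt 2 stays negative. *)

lemma map_poly_of_int_add:
  "map_poly (of_int :: int \<Rightarrow> 'a::comm_ring_1) (p + r) = map_poly of_int p + map_poly of_int r"
  by (intro poly_eqI) (simp add: coeff_map_poly)

lemma map_poly_of_int_diff:
  "map_poly (of_int :: int \<Rightarrow> 'a::comm_ring_1) (p - r) = map_poly of_int p - map_poly of_int r"
  by (intro poly_eqI) (simp add: coeff_map_poly)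

lemma map_poly_of_int_mult:
  "map_poly (of_int :: int \<Rightarrow> 'a::comm_ring_1) (p * r) = map_poly of_int p * map_poly of_int r"
  by (intro poly_eqI) (simp add: coeff_map_poly coeff_mult of_int_sum)

definition qval :: "'a::comm_ring_1 \<Rightarrow> nat \<Rightarrow> 'a" where
  "qval x k = poly (map_poly of_int (qseq k)) x"

lemma qval_int: "qval (x :: int) k = poly (qseq k) x"
  by (simp add: qval_def)

lemma qval_initial:
  "qval x 0 = x^3 - x^2 + 2*x - 7"
  "qval x (Suc 0) = x^5 - 2*x^4 - 2*x^3 + 5*x^2 + 3*x - 9"
  "qval x (Suc (Suc 0)) = x^7 - 2*x^6 - 4*x^5 + 8*x^4 + 4*x^3 - 7*x^2 + 2*x - 7"
  by (simp_all add: qval_def map_poly_pCons algebra_simps eval_nat_numeral)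

lemma qval_rec:
  "qval x (Suc (Suc (Suc k))) = (x^2 - 1) * (qval x (Suc (Suc k)) - qval x (Suc k)) + qval x k"
  by (simp add: qval_def map_poly_of_int_add map_poly_of_int_diff map_poly_of_int_mult
      map_poly_pCons algebra_simps power2_eq_square)

lemma qval_root:
  assumes "f dvd qseq k" "poly (map_poly of_int f) x = 0"
  shows "qval x k = 0"
  using assms by (auto simp: qval_def dvd_def map_poly_of_int_mult)

lemma qval_dvd:
  assumes "f dvd qseq k"
  shows "poly f x dvd qval x k"
  using assms by (auto simp: qval_int dvd_def)

lemma mod_recurrence_step:
  fixes a b c d m :: int
  shows "(c * (a mod m - b mod m) + d) mod m = (c * (a - b) + d) mod m"
proof -
  have "(c * (a mod m - b mod m)) mod m = (c * ((a mod m - b mod m) mod m)) mod m"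
    by (rule mod_mult_right_eq [symmetric])
  also have "\<dots> = (c * (a - b)) mod m" by (simp add: mod_diff_eq mod_mult_right_eq)
  finally show ?thesis by (metis mod_add_left_eq)
qed

(* It is executable, so finitely many of its
   values can be checked by evaluation.  For m = 0 it yields the exact integer values. *)
fun qstate :: "int \<Rightarrow> int \<Rightarrow> nat \<Rightarrow> int \<times> int \<times> int" where
  "qstate x m 0 = ((x^3 - x^2 + 2*x - 7) mod m, (x^5 - 2*x^4 - 2*x^3 + 5*x^2 + 3*x - 9) mod m,
     (x^7 - 2*x^6 - 4*x^5 + 8*x^4 + 4*x^3 - 7*x^2 + 2*x - 7) mod m)"
| "qstate x m (Suc k) =
     (case qstate x m k of (u, v, w) \<Rightarrow> (v, w, ((x^2 - 1) * (w - v) + u) mod m))"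

lemma qstate_eq:
  "qstate x m k = (qval x k mod m, qval x (Suc k) mod m, qval x (Suc (Suc k)) mod m)"
proof (induction k)
  case 0
  show ?case by (simp only: qstate.simps qval_initial)
next
  case (Suc k)
  have "((x^2 - 1) * (qval x (Suc (Suc k)) mod m - qval x (Suc k) mod m) + qval x k mod m) mod m
      = qval x (Suc (Suc (Suc k))) mod m"
    unfolding qval_rec by (simp only: mod_add_right_eq mod_recurrence_step)
  then show ?case by (simp add: Suc.IH)
qed

(* Since each triple determines the next one, a repetition of the initial triple after
   L steps makes the whole residue sequence periodic with period L. *)
lemma qstate_periodic:
  assumes "qstate x m L = qstate x m 0"
  shows "qstate x m (k mod L) = qstate x m k"
proof -
  have shift: "qstate x m (j + L) = qstate x m j" for j
    using assms by (induction j) auto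
  have "qstate x m (i + L * n) = qstate x m i" for i n
  proof (induction n)
    case (Suc n)
    have "i + L * Suc n = (i + L * n) + L" by simp
    then show ?case using shift Suc.IH by (simp only:)
  qed simp
  from this [of "k mod L" "k div L"] show ?thesis by simp
qed

lemma qval_mod_periodic:
  assumes "qstate x m L = qstate x m 0"
  shows "qval x k mod m = fst (qstate x m (k mod L))"
  using qstate_periodic [OF assms, of k] by (simp add: qstate_eq)

lemma qval_exact:
  assumes "qstate x 0 L = qstate x 0 0"
  shows "qval x k = fst (qstate x 0 (k mod L))"
  using qval_mod_periodic [OF assms] by simp

definition obstructs :: "int \<Rightarrow> int \<Rightarrow> nat \<Rightarrow> nat \<Rightarrow> nat \<Rightarrow> bool" where
  "obstructs x m L d r \<longleftrightarrow> 0 < L \<and> d dvd L \<and> qstate x m L = qstate x m 0 \<and>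
     (\<forall>j \<in> set [0..<L]. j mod d = r \<longrightarrow> fst (qstate x m j) \<noteq> 0)"

lemma obstruction:
  assumes "f dvd qseq k" "m dvd poly f x" "obstructs x m L d (k mod d)"
  shows False
proof -
  from assms(3) have L: "0 < L" "d dvd L" "qstate x m L = qstate x m 0"
    and nonzero: "\<forall>j \<in> set [0..<L]. j mod d = k mod d \<longrightarrow> fst (qstate x m j) \<noteq> 0"
    by (auto simp: obstructs_def)
  have "m dvd qval x k" using assms(1,2) qval_dvd dvd_trans by blast
  then have "fst (qstate x m (k mod L)) = 0" using qval_mod_periodic [OF L(3), of k] by simp
  moreover have "k mod L \<in> set [0..<L]" "k mod L mod d = k mod d"
    using L(1,2) by (simp_all add: mod_mod_cancel)
  ultimately show False using nonzero by blast
qed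

(* At x = 1 modulo 2 the sequence is (1, 0, 1, 1, 0, 1, ...), while f(1) is even for
   every f = w^2 + a w + b with a even and b odd: this excludes k mod 6 in {0,2,3,5}. *)
lemma parity_obstruction:
  fixes a b :: int
  assumes "even a" "odd b" "k mod 6 \<in> {0, 2, 3, 5}"
  shows "\<not> [:b, a, 1:] dvd qseq k"
proof
  assume dvd: "[:b, a, 1:] dvd qseq k"
  have certificates: "\<forall>r \<in> {0, 2, 3, 5}. obstructs 1 2 6 6 r" by code_simp
  have "2 dvd poly [:b, a, 1:] 1" using assms(1,2) by simp
  from dvd this show False by (rule obstruction [OF _ _ bspec [OF certificates assms(3)]])
qed

(* At x = 1, -1, 0 the sequences are exactly periodic; for k mod 6 in {1, 4} the
   values are as follows.  Since f(x) divides q_n(x), they bound a and b. *)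
lemma qval_at_small_points:
  assumes "k mod 6 \<in> {1, 4}"
  shows "qval (1::int) k = -4" "qval (-1::int) k = -8"
    and "qval (0::int) k = (if k mod 6 = 1 then -9 else -7)"
proof -
  have periodic: "qstate 1 0 6 = qstate 1 0 0" "qstate (-1) 0 6 = qstate (-1) 0 0"
    "qstate 0 0 6 = qstate 0 0 0"
    by code_simp+
  have small_values: "\<forall>r \<in> {1, 4}. fst (qstate 1 0 r) = -4 \<and> fst (qstate (-1) 0 r) = -8 \<and>
      fst (qstate 0 0 r) = (if r = 1 then -9 else -7)"
    by code_simp
  show "qval (1::int) k = -4" "qval (-1::int) k = -8"
    and "qval (0::int) k = (if k mod 6 = 1 then -9 else -7)"
    using small_values assms qval_exact [OF periodic(1)] qval_exact [OF periodic(2)]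
      qval_exact [OF periodic(3)] by auto
qed

lemma factor_values_divide:
  fixes a b :: int
  assumes "[:b, a, 1:] dvd qseq k" "k mod 6 \<in> {1, 4}"
  shows "(1 + a + b) dvd 4" "(1 - a + b) dvd 8" "b dvd (if k mod 6 = 1 then 9 else 7)"
proof -
  have "poly [:b, a, 1:] x dvd qval x k" for x :: int
    using assms(1) by (rule qval_dvd)
  from this [of 1] this [of "-1"] this [of 0] show
    "(1 + a + b) dvd 4" "(1 - a + b) dvd 8" "b dvd (if k mod 6 = 1 then 9 else 7)"
    using qval_at_small_points [OF assms(2)] by (auto simp: algebra_simps split: if_splits)
qed

definition candidates :: "int \<Rightarrow> (int \<times> int) list" where
  "candidates c = filter
     (\<lambda>(a, b). even a \<and> odd b \<and> (1 + a + b) dvd 4 \<and> (1 - a + b) dvd 8 \<and> b dvd c)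
     (List.product [-6..6] [-7..5])"

(* The divisibilities force |a| <= 6 and -7 <= b <= 5, so the list is exhaustive. *)
lemma candidates_complete:
  fixes a b c :: int
  assumes "even a" "odd b" "(1 + a + b) dvd 4" "(1 - a + b) dvd 8" "b dvd c"
  shows "(a, b) \<in> set (candidates c)"
proof -
  have "\<bar>1 + a + b\<bar> \<le> 4" "\<bar>1 - a + b\<bar> \<le> 8"
    using dvd_imp_le_int [OF _ assms(3)] dvd_imp_le_int [OF _ assms(4)] by simp_all
  then have "a \<in> {-6..6}" "b \<in> {-7..5}" by auto
  with assms show ?thesis
    unfolding candidates_def set_filter set_product set_upto by simp
qed

lemma residue_candidates:
  fixes a b :: int
  assumes "even a" "odd b" "[:b, a, 1:] dvd qseq k" "k mod 6 \<in> {1, 4}"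
  shows "(a, b) \<in> set (candidates (if k mod 6 = 1 then 9 else 7))"
  using factor_values_divide [OF assms(3,4)] by (intro candidates_complete assms(1,2))

definition certified :: "nat \<Rightarrow> (int \<times> int) \<times> (int \<times> int \<times> nat) \<Rightarrow> bool" where
  "certified r c \<longleftrightarrow>
     (case c of ((a, b), (x, m, L)) \<Rightarrow> m dvd x^2 + a*x + b \<and> obstructs x m L 6 r)"

lemma certified_excludes:
  assumes "list_all (certified (k mod 6)) table" "(a, b) \<in> fst ` set table"
  shows "\<not> [:b, a, 1:] dvd qseq k"
proof
  assume dvd: "[:b, a, 1:] dvd qseq k"
  from assms obtain x m L where "certified (k mod 6) ((a, b), (x, m, L))"
    by (force simp: list_all_iff)
  then have "m dvd poly [:b, a, 1:] x" "obstructs x m L 6 (k mod 6)"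
    by (simp_all add: certified_def power2_eq_square algebra_simps)
  with dvd show False by (rule obstruction)
qed

(* Certificates for the candidates in the classes k = 1 and k = 4 (mod 6), found by
   search and checked by evaluation below. *)
definition table1 :: "((int \<times> int) \<times> (int \<times> int \<times> nat)) list" where
  "table1 = [((0, 1), (-3, 5, 6)), ((2, -1), (-5, 7, 6)), ((-2, -1), (-3, 7, 12)),
     ((0, -3), (-6, 11, 6)), ((0, 3), (-5, 7, 6)), ((4, -1), (2, 11, 6)), ((6, -3), (2, 13, 6)),
     ((-4, -1), (-3, 5, 6)), ((-6, 1), (-5, 7, 6))]"

definition table4 :: "((int \<times> int) \<times> (int \<times> int \<times> nat)) list" where
  "table4 = [((0, 1), (-3, 5, 6)), ((2, -1), (-5, 7, 6)), ((-2, -1), (-5, 17, 24)),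
     ((4, -1), (2, 11, 6)), ((-4, -1), (-3, 5, 6)), ((-6, 1), (-5, 7, 6))]"

lemma table1_certified: "list_all (certified 1) table1"
  by code_simp

lemma table4_certified: "list_all (certified 4) table4"
  by code_simp

lemma candidates_covered:
  "set (candidates 9) \<subseteq> fst ` set table1"
  "set (candidates 7) \<subseteq> insert (2, -7) (fst ` set table4)"
  by code_simp+

lemma sqrt2_twice: "sqrt 2 * (sqrt 2 * x) = 2 * x"
  by (simp add: mult.assoc [symmetric])

(* A third-order recurrence with coefficient c >= 4 started by negative values that at
   least double in size keeps doubling, hence never vanishes. *)
lemma recurrence_stays_negative:
  fixes r :: "nat \<Rightarrow> real" and c :: real
  assumes rec: "\<And>k. r (Suc (Suc (Suc k))) = c * (r (Suc (Suc k)) - r (Suc k)) + r k"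
    and c: "4 \<le> c"
    and init: "r 0 < 0" "r (Suc 0) \<le> 2 * r 0" "r (Suc (Suc 0)) \<le> 2 * r (Suc 0)"
  shows "r k < 0"
proof -
  have "r k < 0 \<and> r (Suc k) \<le> 2 * r k \<and> r (Suc (Suc k)) \<le> 2 * r (Suc k)"
  proof (induction k)
    case 0
    show ?case using init by blast
  next
    case (Suc k)
    then have IH: "r k < 0" "r (Suc k) \<le> 2 * r k" "r (Suc (Suc k)) \<le> 2 * r (Suc k)"
      by simp_all
    then have decreasing: "r (Suc (Suc k)) - r (Suc k) \<le> 0" by linarith
    have "c * (r (Suc (Suc k)) - r (Suc k)) \<le> 4 * (r (Suc (Suc k)) - r (Suc k))"
      using mult_right_mono_neg [OF c decreasing] .
    then have "r (Suc (Suc (Suc k))) \<le> 4 * (r (Suc (Suc k)) - r (Suc k)) + r k"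
      unfolding rec [of k] by (rule add_right_mono)
    then have "r (Suc (Suc (Suc k))) \<le> 2 * r (Suc (Suc k))"
      using IH by argo
    with IH show ?case by linarith
  qed
  then show ?thesis by blast
qed

(* The candidate w^2 + 2w - 7 is excluded over R instead:
   at its root -1 - 2 sqrt 2 the recurrence coefficient x^2 - 1 = 8 + 4 sqrt 2 is at
   least 4, which keeps the values negative forever. *)
lemma no_factor_w2_plus_2w_minus_7: "\<not> [:-7, 2, 1:] dvd qseq k"
proof
  assume dvd: "[:-7, 2, 1:] dvd qseq k"
  define \<theta> :: real where "\<theta> = -1 - 2 * sqrt 2"
  have "poly (map_poly of_int [:-7, 2, 1:]) \<theta> = 0"
    by (simp add: \<theta>_def map_poly_pCons algebra_simps sqrt2_twice)
  with dvd have "qval \<theta> k = 0" by (rule qval_root)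
  moreover have "qval \<theta> k < 0"
  proof (rule recurrence_stays_negative)
    show "qval \<theta> (Suc (Suc (Suc j))) =
        (\<theta>^2 - 1) * (qval \<theta> (Suc (Suc j)) - qval \<theta> (Suc j)) + qval \<theta> j" for j
      by (rule qval_rec)
    have "0 \<le> sqrt 2" by simp
    moreover have "\<theta>^2 - 1 = 8 + 4 * sqrt 2"
      by (simp add: \<theta>_def power2_eq_square algebra_simps sqrt2_twice)
    moreover have "qval \<theta> 0 = -43 - 30 * sqrt 2" "qval \<theta> (Suc 0) = -544 - 384 * sqrt 2"
      "qval \<theta> (Suc (Suc 0)) = -6843 - 4838 * sqrt 2"
      by (simp_all add: qval_initial \<theta>_def power_mult_distrib algebra_simps eval_nat_numeral
          sqrt2_twice)
    ultimately show "4 \<le> \<theta>^2 - 1" "qval \<theta> 0 < 0" "qval \<theta> (Suc 0) \<le> 2 * qval \<theta> 0"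
      "qval \<theta> (Suc (Suc 0)) \<le> 2 * qval \<theta> (Suc 0)"
      by linarith+
  qed
  ultimately show False by simp
qed

lemma no_odd_quadratic_factor:
  fixes a b :: int
  assumes "even a" "odd b"
  shows "\<not> [:b, a, 1:] dvd qseq k"
proof
  assume dvd: "[:b, a, 1:] dvd qseq k"
  have "k mod 6 \<in> {0, 2, 3, 5} \<or> k mod 6 = 1 \<or> k mod 6 = 4" by simp presburger
  then consider "k mod 6 \<in> {0, 2, 3, 5}" | (r1) "k mod 6 = 1" | (r4) "k mod 6 = 4" by blast
  then show False
  proof cases
    case 1
    with dvd show False using parity_obstruction [OF assms] by simp
  next
    case r1
    with residue_candidates [OF assms dvd] have "(a, b) \<in> set (candidates 9)" by simp
    then have "(a, b) \<in> fst ` set table1" by (rule subsetD [OF candidates_covered(1)])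
    with dvd show False using certified_excludes [of k] table1_certified r1 by simp
  next
    case r4
    with residue_candidates [OF assms dvd] have "(a, b) \<in> set (candidates 7)" by simp
    then have "(a, b) \<in> insert (2, -7) (fst ` set table4)"
      by (rule subsetD [OF candidates_covered(2)])
    with dvd show False
      using certified_excludes [of k] table4_certified r4 no_factor_w2_plus_2w_minus_7 by auto
  qed
qed

lemma monic_quadratic_eq:
  fixes f :: "'a::comm_ring_1 poly"
  assumes "degree f = 2" "lead_coeff f = 1"
  shows "f = [:coeff f 0, coeff f 1, 1:]"
proof (rule poly_eqI)
  fix i
  show "coeff f i = coeff [:coeff f 0, coeff f 1, 1:] i"
    using assms by (cases i; cases "i - 1"; cases "i - 2")
      (auto simp: coeff_pCons coeff_eq_0 numeral_2_eq_2)
qed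

theorem lemma4p4:
  fixes n :: int
  assumes "odd n" and "n \<le> -1"
  shows "\<not> (\<exists>f :: int poly. degree f = 2 \<and> lead_coeff f = 1 \<and> f dvd q n \<and>
            (\<forall>i. 2 dvd coeff (f - [:1, 1:] ^ 2) i))"
proof
  assume "\<exists>f :: int poly. degree f = 2 \<and> lead_coeff f = 1 \<and> f dvd q n \<and>
            (\<forall>i. 2 dvd coeff (f - [:1, 1:] ^ 2) i)"
  then obtain f :: "int poly" where f: "degree f = 2" "lead_coeff f = 1" "f dvd q n"
    and congruent: "\<forall>i. 2 dvd coeff (f - [:1, 1:] ^ 2) i" by blast
  define a b where "a = coeff f 1" and "b = coeff f 0"
  have f_eq: "f = [:b, a, 1:]" using monic_quadratic_eq [OF f(1,2)] by (simp add: a_def b_def)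
  have "[:1, 1:] ^ 2 = [:1, 2, 1 :: int:]" by (simp add: power2_eq_square)
  with congruent [rule_format, of 0] congruent [rule_format, of 1] f_eq
  have "2 dvd b - 1" "2 dvd a - 2" by simp_all
  then have "even a" "odd b" by presburger+
  moreover have "[:b, a, 1:] dvd qseq (nat ((- n - 1) div 2))" using f(3) f_eq by (simp add: q_def)
  ultimately show False by (metis no_odd_quadratic_factor)
qed

end
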